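(* Let $T_{n,k}=\left[\begin{array}{cc|c}\alpha,&\beta&\gamma\\ \alpha',&\beta'&\gamma'\end{array}\right]_{n,k}$ be a GKP triangle with EGF $G(t,z)$. (i) If $\gamma=0$ and $\gamma'\neq0$, then the left-trimmed triangle $T^*_{n,k}:=(\gamma')^{-1}T_{n+1,k+1}$, $0\le k\le n$, is the GKP triangle $\left[\begin{array}{cc|c}\alpha,&\beta&\alpha+\beta\\ \alpha',&\beta'&\alpha'+\beta'+\gamma'\end{array}\right]_{n,k}$, and its EGF equals $(\gamma')^{-1}\,\frac{1}{t}\,\frac{\partial G}{\partial z}(t,z)$. (ii) If $\gamma'=0$ and $\gamma\neq0$, then the right-trimmed triangle $T^*_{n,k}:=\gamma^{-1}T_{n+1,k}$, $0\le k\le n$, is the GKP triangle $\left[\begin{array}{cc|c}\alpha,&\beta&\alpha+\gamma\\ \alpha',&\beta'&\alpha'\end{array}\right]_{n,k}$, and its EGF equals $\gamma^{-1}\frac{\partial G}{\partial z}(t,z)$.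
   Context: GKP triangle: for complex parameters $\alpha,\beta,\gamma,\alpha',\beta',\gamma'$, the array $T_{n,k}=\left[\begin{array}{cc|c}\alpha,&\beta&\gamma\\ \alpha',&\beta'&\gamma'\end{array}\right]_{n,k}$ ($n,k\in\mathbb Z$) is defined by $T_{0,0}=1$, $T_{n,k}=0$ if $n<0$, $k<0$ or $k>n$, and $T_{n+1,k+1}=[\alpha n+\beta(k+1)+\gamma]\,T_{n,k+1}+[\alpha' n+\beta' k+\gamma']\,T_{n,k}$ for all $n\ge0$ and all integers $k$. Its $n$th row polynomial is $G_n(t)=\sum_{k=0}^n T_{n,k}t^k$ and its (bivariate exponential generating function) EGF is $G(t,z)=\sum_{n\ge0}G_n(t)\,z^n/n!$. *)

theory Defs
  imports Complex_Main "HOL-Computational_Algebra.Polynomial" "HOL-Computational_Algebra.Formal_Power_Series"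
begin

text \<open>GKP triangle with parameters a b c a' b' c' (alpha, beta, gamma, alpha', beta', gamma'),
  indexed by n :: nat and k :: int.\<close>

primrec gkp :: "complex \<Rightarrow> complex \<Rightarrow> complex \<Rightarrow> complex \<Rightarrow> complex \<Rightarrow> complex \<Rightarrow> nat \<Rightarrow> int \<Rightarrow> complex" where
  "gkp a b c a' b' c' 0 k = (if k = 0 then 1 else 0)"
| "gkp a b c a' b' c' (Suc n) k =
     (if k < 0 \<or> k > int (Suc n) then 0
      else (a * of_nat n + b * of_int k + c) * gkp a b c a' b' c' n k
         + (a' * of_nat n + b' * of_int (k - 1) + c') * gkp a b c a' b' c' n (k - 1))"

definition gkp_row :: "complex \<Rightarrow> complex \<Rightarrow> complex \<Rightarrow> complex \<Rightarrow> complex \<Rightarrow> complex \<Rightarrow> nat \<Rightarrow> complex poly" where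
  "gkp_row a b c a' b' c' n = (\<Sum>k\<le>n. monom (gkp a b c a' b' c' n (int k)) k)"

text \<open>Bivariate EGF G(t,z) = sum_n G_n(t) z^n / n!, as a formal power series in z
  with coefficients in the polynomial ring C[t].\<close>
definition gkp_egf :: "complex \<Rightarrow> complex \<Rightarrow> complex \<Rightarrow> complex \<Rightarrow> complex \<Rightarrow> complex \<Rightarrow> complex poly fps" where
  "gkp_egf a b c a' b' c' = Abs_fps (\<lambda>n. smult (inverse (fact n)) (gkp_row a b c a' b' c' n))"

definition tri_egf :: "(nat \<Rightarrow> int \<Rightarrow> complex) \<Rightarrow> complex poly fps" where
  "tri_egf T = Abs_fps (\<lambda>n. smult (inverse (fact n)) (\<Sum>k\<le>n. monom (T n (int k)) k))"

end

theory Submission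
  imports Defs
begin

text \<open>Outside the triangle both sides of the GKP recurrence vanish, so it holds for every integer k.
  With \<open>\<gamma> = 0\<close> the column k = 0 vanishes below row 0, with \<open>\<gamma>' = 0\<close> the diagonal does; removing
  it and dividing by the surviving boundary parameter turns the recurrence of T into a recurrence
  of the same shape with shifted parameters, proved by induction on n for all k at once.
  On the EGF side, differentiating in z shifts the rows up by one; when the removed boundary
  vanishes, the shifted triangle is exactly the trimmed one (times t in the left-trimmed case).\<close>

lemma gkp_eq_0_outside: "k < 0 \<or> k > int n \<Longrightarrow> gkp a b c a' b' c' n k = 0"
  by (induction n arbitrary: k) auto

lemma gkp_Suc:
  "gkp a b c a' b' c' (Suc n) k =
     (a * of_nat n + b * of_int k + c) * gkp a b c a' b' c' n k
   + (a' * of_nat n + b' * of_int (k - 1) + c') * gkp a b c a' b' c' n (k - 1)"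
  by (cases "k < 0 \<or> k > int (Suc n)") (auto simp: gkp_eq_0_outside)

lemma gkp_left_trim:
  assumes "c = 0" "c' \<noteq> 0"
  shows "inverse c' * gkp a b c a' b' c' (Suc n) (k + 1) = gkp a b (a + b) a' b' (a' + b' + c') n k"
proof (induction n arbitrary: k)
  case 0
  show ?case
    using assms by (cases "k = -1") (simp_all add: gkp_Suc del: gkp.simps(2))
next
  case (Suc n)
  have "inverse c' * gkp a b c a' b' c' (Suc (Suc n)) (k + 1)
      = (a * of_nat n + b * of_int k + (a + b)) * (inverse c' * gkp a b c a' b' c' (Suc n) (k + 1))
      + (a' * of_nat n + b' * of_int (k - 1) + (a' + b' + c')) * (inverse c' * gkp a b c a' b' c' (Suc n) (k - 1 + 1))"
    using assms by (simp only: gkp_Suc[of _ _ _ _ _ _ "Suc n"]) (simp add: algebra_simps)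
  also have "\<dots> = (a * of_nat n + b * of_int k + (a + b)) * gkp a b (a + b) a' b' (a' + b' + c') n k
      + (a' * of_nat n + b' * of_int (k - 1) + (a' + b' + c')) * gkp a b (a + b) a' b' (a' + b' + c') n (k - 1)"
    by (simp only: Suc)
  also have "\<dots> = gkp a b (a + b) a' b' (a' + b' + c') (Suc n) k"
    by (rule gkp_Suc[symmetric])
  finally show ?case .
qed

lemma gkp_right_trim:
  assumes "c' = 0" "c \<noteq> 0"
  shows "inverse c * gkp a b c a' b' c' (Suc n) k = gkp a b (a + c) a' b' a' n k"
proof (induction n arbitrary: k)
  case 0
  show ?case
    using assms by (simp add: gkp_Suc del: gkp.simps(2))
next
  case (Suc n)
  have "inverse c * gkp a b c a' b' c' (Suc (Suc n)) k
      = (a * of_nat n + b * of_int k + (a + c)) * (inverse c * gkp a b c a' b' c' (Suc n) k)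
      + (a' * of_nat n + b' * of_int (k - 1) + a') * (inverse c * gkp a b c a' b' c' (Suc n) (k - 1))"
    using assms by (simp only: gkp_Suc[of _ _ _ _ _ _ "Suc n"]) (simp add: algebra_simps)
  also have "\<dots> = (a * of_nat n + b * of_int k + (a + c)) * gkp a b (a + c) a' b' a' n k
      + (a' * of_nat n + b' * of_int (k - 1) + a') * gkp a b (a + c) a' b' a' n (k - 1)"
    by (simp only: Suc)
  also have "\<dots> = gkp a b (a + c) a' b' a' (Suc n) k"
    by (rule gkp_Suc[symmetric])
  finally show ?case .
qed

lemma gkp_egf_eq_tri_egf: "gkp_egf a b c a' b' c' = tri_egf (gkp a b c a' b' c')"
  unfolding gkp_egf_def gkp_row_def tri_egf_def ..

lemma coeff_tri_egf_nth:
  "coeff (fps_nth (tri_egf T) n) j = (if j \<le> n then T n (int j) / fact n else 0)"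
proof -
  have "coeff (\<Sum>k\<le>n. monom (T n (int k)) k) j = (\<Sum>k\<le>n. if k = j then T n (int k) else 0)"
    unfolding coeff_sum coeff_monom by (rule sum.cong) auto
  then show ?thesis
    by (simp add: tri_egf_def sum.delta' field_simps)
qed

lemma coeff_fps_deriv_tri_egf_nth:
  "coeff (fps_nth (fps_deriv (tri_egf T)) n) j = (if j \<le> Suc n then T (Suc n) (int j) / fact n else 0)"
  by (simp add: of_nat_mult_conv_smult coeff_tri_egf_nth field_simps del: of_nat_Suc fact_Suc)
     (simp add: field_simps)

lemma tri_egf_scale: "tri_egf (\<lambda>n k. x * T n k) = fps_const [:x:] * tri_egf T"
  by (rule fps_ext, rule poly_eqI) (simp add: coeff_tri_egf_nth)

lemma fps_deriv_tri_egf_right: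
  assumes "\<And>n. T (Suc n) (int (Suc n)) = 0"
  shows "fps_deriv (tri_egf T) = tri_egf (\<lambda>n. T (Suc n))"
proof (rule fps_ext, rule poly_eqI)
  fix n j
  show "coeff (fps_nth (fps_deriv (tri_egf T)) n) j = coeff (fps_nth (tri_egf (\<lambda>n. T (Suc n))) n) j"
    using assms[of n] unfolding coeff_fps_deriv_tri_egf_nth coeff_tri_egf_nth by (auto simp: le_Suc_eq)
qed

lemma fps_deriv_tri_egf_left:
  assumes "\<And>n. T (Suc n) 0 = 0"
  shows "fps_deriv (tri_egf T) = fps_const [:0, 1:] * tri_egf (\<lambda>n k. T (Suc n) (k + 1))"
proof (rule fps_ext, rule poly_eqI)
  fix n j
  show "coeff (fps_nth (fps_deriv (tri_egf T)) n) j =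
        coeff (fps_nth (fps_const [:0, 1:] * tri_egf (\<lambda>n k. T (Suc n) (k + 1))) n) j"
    using assms[of n] unfolding coeff_fps_deriv_tri_egf_nth
    by (cases j) (simp_all add: coeff_tri_egf_nth add.commute)
qed

lemma fps_eq_div_X_poly:
  fixes x :: "'a::field"
  assumes "H = fps_const (monom x 1) * G" "x \<noteq> 0"
  shows "G = Abs_fps (\<lambda>n. smult (inverse x) (fps_nth H n div [:0, 1:]))"
proof (rule fps_ext)
  fix n
  have "fps_nth H n = [:0, 1:] * ([:x:] * fps_nth G n)"
    by (simp add: assms(1) monom_Suc monom_0)
  then have "fps_nth H n div [:0, 1:] = [:x:] * fps_nth G n"
    by (simp only: nonzero_mult_div_cancel_left pCons_eq_0_iff one_neq_zero simp_thms)
  then show "fps_nth G n = fps_nth (Abs_fps (\<lambda>n. smult (inverse x) (fps_nth H n div [:0, 1:]))) n"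
    using assms(2) by simp
qed

lemma fps_deriv_gkp_egf_left_trim:
  assumes "c = 0" "c' \<noteq> 0"
  shows "fps_deriv (gkp_egf a b c a' b' c')
           = fps_const (monom c' 1) * tri_egf (\<lambda>n k. inverse c' * gkp a b c a' b' c' (Suc n) (k + 1))"
proof -
  have "gkp a b c a' b' c' (Suc n) 0 = 0" for n
    using assms gkp_left_trim[of c c' a b a' b' n "-1"] by (simp add: gkp_eq_0_outside)
  then have "fps_deriv (gkp_egf a b c a' b' c')
               = fps_const [:0, 1:] * tri_egf (\<lambda>n k. gkp a b c a' b' c' (Suc n) (k + 1))"
    unfolding gkp_egf_eq_tri_egf by (rule fps_deriv_tri_egf_left)
  moreover have "monom c' 1 * [:inverse c':] = [:0, 1:]"
    using assms by (simp add: monom_Suc monom_0)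
  ultimately show ?thesis
    by (simp add: tri_egf_scale mult.assoc[symmetric] fps_const_mult[symmetric] del: gkp.simps)
qed

lemma tri_egf_gkp_right_trim:
  assumes "c' = 0" "c \<noteq> 0"
  shows "tri_egf (\<lambda>n k. inverse c * gkp a b c a' b' c' (Suc n) k)
           = fps_const [:inverse c:] * fps_deriv (gkp_egf a b c a' b' c')"
proof -
  have "gkp a b c a' b' c' (Suc n) (int (Suc n)) = 0" for n
    using assms gkp_right_trim[of c' c a b a' b' n "int (Suc n)"] by (simp add: gkp_eq_0_outside)
  then have "fps_deriv (gkp_egf a b c a' b' c') = tri_egf (\<lambda>n. gkp a b c a' b' c' (Suc n))"
    unfolding gkp_egf_eq_tri_egf by (rule fps_deriv_tri_egf_right)
  then show ?thesis
    by (simp add: tri_egf_scale del: gkp.simps)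
qed

theorem mainTheorem1:
  fixes a b c a' b' c' :: complex
  shows
  "(c = 0 \<and> c' \<noteq> 0 \<longrightarrow>
     (\<forall>n::nat. \<forall>k::int. 0 \<le> k \<and> k \<le> int n \<longrightarrow>
        inverse c' * gkp a b c a' b' c' (Suc n) (k + 1) = gkp a b (a + b) a' b' (a' + b' + c') n k)
   \<and> fps_deriv (gkp_egf a b c a' b' c')
       = fps_const (monom c' 1) * tri_egf (\<lambda>n k. inverse c' * gkp a b c a' b' c' (Suc n) (k + 1))
   \<and> tri_egf (\<lambda>n k. inverse c' * gkp a b c a' b' c' (Suc n) (k + 1))
       = Abs_fps (\<lambda>n. smult (inverse c') (fps_nth (fps_deriv (gkp_egf a b c a' b' c')) n div [:0, 1:])))
   \<and>
   (c' = 0 \<and> c \<noteq> 0 \<longrightarrow>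
     (\<forall>n::nat. \<forall>k::int. 0 \<le> k \<and> k \<le> int n \<longrightarrow>
        inverse c * gkp a b c a' b' c' (Suc n) k = gkp a b (a + c) a' b' a' n k)
   \<and> tri_egf (\<lambda>n k. inverse c * gkp a b c a' b' c' (Suc n) k)
       = fps_const [:inverse c:] * fps_deriv (gkp_egf a b c a' b' c'))"
proof (intro conjI impI allI)
  assume h: "c = 0 \<and> c' \<noteq> 0"
  then show "inverse c' * gkp a b c a' b' c' (Suc n) (k + 1) = gkp a b (a + b) a' b' (a' + b' + c') n k"
    for n k by (simp add: gkp_left_trim del: gkp.simps)
  show deriv: "fps_deriv (gkp_egf a b c a' b' c')
      = fps_const (monom c' 1) * tri_egf (\<lambda>n k. inverse c' * gkp a b c a' b' c' (Suc n) (k + 1))"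
    using h by (simp add: fps_deriv_gkp_egf_left_trim)
  show "tri_egf (\<lambda>n k. inverse c' * gkp a b c a' b' c' (Suc n) (k + 1))
      = Abs_fps (\<lambda>n. smult (inverse c') (fps_nth (fps_deriv (gkp_egf a b c a' b' c')) n div [:0, 1:]))"
    using fps_eq_div_X_poly[OF deriv] h by simp
next
  assume h: "c' = 0 \<and> c \<noteq> 0"
  then show "inverse c * gkp a b c a' b' c' (Suc n) k = gkp a b (a + c) a' b' a' n k"
    for n k by (simp add: gkp_right_trim del: gkp.simps)
  show "tri_egf (\<lambda>n k. inverse c * gkp a b c a' b' c' (Suc n) k)
      = fps_const [:inverse c:] * fps_deriv (gkp_egf a b c a' b' c')"
    using h by (simp add: tri_egf_gkp_right_trim del: gkp.simps)
qed

end
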